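(* For every Lie algebra $\mathfrak{g}$ over a field $\mathbb{F}$ there is a long exact sequence $$0\to\mathrm{H}^2(\mathfrak{g},\mathbb{F})\to\mathrm{H}^1(\mathfrak{g},\mathfrak{g}^* )\to\mathrm{HR}^0(\mathfrak{g})\to\mathrm{H}^3(\mathfrak{g},\mathbb{F})\to\mathrm{H}^2(\mathfrak{g},\mathfrak{g}^* )\to\mathrm{HR}^1(\mathfrak{g})\to\cdots$$ (with general terms $\mathrm{H}^{n+2}(\mathfrak{g},\mathbb{F})\to\mathrm{H}^{n+1}(\mathfrak{g},\mathfrak{g}^* )\to\mathrm{HR}^n(\mathfrak{g})\to\mathrm{H}^{n+3}(\mathfrak{g},\mathbb{F})$) and an isomorphism $\mathrm{H}^1(\mathfrak{g},\mathbb{F})\cong\mathrm{H}^0(\mathfrak{g},\mathfrak{g}^* )$.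
   Context: $\mathrm{H}^\bullet$ denotes Chevalley–Eilenberg cohomology; $\mathbb{F}$ is the trivial module and $\mathfrak{g}^*$ the coadjoint module, $(x\cdot f)(y)=-f([x,y])$. For $k\ge 0$ the map $m^k:\mathrm{C}^{k+1}(\mathfrak{g},\mathbb{F})\to\mathrm{C}^k(\mathfrak{g},\mathfrak{g}^* )$, $(m^kf)(x_1,\dots,x_k)(x)=f(x_1,\dots,x_k,x)$ (dual to exterior multiplication $\Lambda^k\mathfrak{g}\otimes\mathfrak{g}\to\Lambda^{k+1}\mathfrak{g}$), is an injective morphism of cochain complexes from the truncated, shifted complex $\overline{\mathrm{C}}^{\bullet+1}(\mathfrak{g},\mathbb{F})$ (with $\overline{\mathrm{C}}^0=0$, $\overline{\mathrm{C}}^j=\mathrm{C}^j$ for $j>0$) into $\mathrm{C}^\bullet(\mathfrak{g},\mathfrak{g}^* )$. Define the cochain complex $\mathrm{CR}^n(\mathfrak{g}):=\mathrm{C}^{n+1}(\mathfrak{g},\mathfrak{g}^* )/m^{n+1}(\mathrm{C}^{n+2}(\mathfrak{g},\mathbb{F}))$ with the induced differential, and $\mathrm{HR}^n(\mathfrak{g})$ its $n$-th cohomology. *)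

theory Defs
  imports Main "HOL.Vector_Spaces" "HOL-Library.Function_Algebras"
begin

definition lie_algebra :: "('k::field \<Rightarrow> 'g::ab_group_add \<Rightarrow> 'g) \<Rightarrow> ('g \<Rightarrow> 'g \<Rightarrow> 'g) \<Rightarrow> bool" where
  "lie_algebra s br \<longleftrightarrow> vector_space s \<and>
     (\<forall>x y z. br (x + y) z = br x z + br y z) \<and>
     (\<forall>x y z. br x (y + z) = br x y + br x z) \<and>
     (\<forall>a x y. br (s a x) y = s a (br x y)) \<and>
     (\<forall>a x y. br x (s a y) = s a (br x y)) \<and>
     (\<forall>x. br x x = 0) \<and>
     (\<forall>x y z. br x (br y z) + br y (br z x) + br z (br x y) = 0)"

definition del_nth :: "nat \<Rightarrow> 'a list \<Rightarrow> 'a list" where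
  "del_nth i xs = take i xs @ drop (Suc i) xs"

text \<open>Chevalley--Eilenberg k-cochains with values in a module whose underlying space is the
subspace M of the type 'm (scalar multiplication sm): alternating k-multilinear maps,
encoded as functions on argument lists of length k (and 0 on lists of other lengths).\<close>

definition ce_cochains :: "('k::field \<Rightarrow> 'g::ab_group_add \<Rightarrow> 'g) \<Rightarrow> ('k \<Rightarrow> 'm::ab_group_add \<Rightarrow> 'm)
    \<Rightarrow> 'm set \<Rightarrow> nat \<Rightarrow> ('g list \<Rightarrow> 'm) set" where
  "ce_cochains s sm M k = {f.
     (\<forall>xs. length xs \<noteq> k \<longrightarrow> f xs = 0) \<and>
     (\<forall>xs. length xs = k \<longrightarrow> f xs \<in> M) \<and>
     (\<forall>xs i y z. length xs = k \<longrightarrow> i < k \<longrightarrow>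
         f (xs[i := y + z]) = f (xs[i := y]) + f (xs[i := z])) \<and>
     (\<forall>xs i a y. length xs = k \<longrightarrow> i < k \<longrightarrow>
         f (xs[i := s a y]) = sm a (f (xs[i := y]))) \<and>
     (\<forall>xs. length xs = k \<longrightarrow> \<not> distinct xs \<longrightarrow> f xs = 0)}"

definition ce_diff :: "('k::field \<Rightarrow> 'm::ab_group_add \<Rightarrow> 'm) \<Rightarrow> ('g \<Rightarrow> 'm \<Rightarrow> 'm) \<Rightarrow> ('g \<Rightarrow> 'g \<Rightarrow> 'g)
    \<Rightarrow> nat \<Rightarrow> ('g list \<Rightarrow> 'm) \<Rightarrow> 'g list \<Rightarrow> 'm" where
  "ce_diff sm act br k f xs = (if length xs = Suc k then
      (\<Sum>i<Suc k. sm ((-1) ^ i) (act (xs ! i) (f (del_nth i xs))))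
    + (\<Sum>j<Suc k. \<Sum>i<j. sm ((-1) ^ (i + j))
          (f (br (xs ! i) (xs ! j) # del_nth i (del_nth j xs))))
    else 0)"

definition ce_cocycles :: "('k::field \<Rightarrow> 'g::ab_group_add \<Rightarrow> 'g) \<Rightarrow> ('k \<Rightarrow> 'm::ab_group_add \<Rightarrow> 'm)
    \<Rightarrow> ('g \<Rightarrow> 'm \<Rightarrow> 'm) \<Rightarrow> ('g \<Rightarrow> 'g \<Rightarrow> 'g) \<Rightarrow> 'm set \<Rightarrow> nat \<Rightarrow> ('g list \<Rightarrow> 'm) set" where
  "ce_cocycles s sm act br M k = {f \<in> ce_cochains s sm M k. ce_diff sm act br k f = 0}"

definition ce_coboundaries :: "('k::field \<Rightarrow> 'g::ab_group_add \<Rightarrow> 'g) \<Rightarrow> ('k \<Rightarrow> 'm::ab_group_add \<Rightarrow> 'm)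
    \<Rightarrow> ('g \<Rightarrow> 'm \<Rightarrow> 'm) \<Rightarrow> ('g \<Rightarrow> 'g \<Rightarrow> 'g) \<Rightarrow> 'm set \<Rightarrow> nat \<Rightarrow> ('g list \<Rightarrow> 'm) set" where
  "ce_coboundaries s sm act br M k =
     (if k = 0 then {0} else ce_diff sm act br (k - 1) ` ce_cochains s sm M (k - 1))"

definition triv_act :: "'g \<Rightarrow> 'k::field \<Rightarrow> 'k" where
  "triv_act x a = 0"

definition dual_scale :: "'k::field \<Rightarrow> ('g \<Rightarrow> 'k) \<Rightarrow> ('g \<Rightarrow> 'k)" where
  "dual_scale a \<phi> = (\<lambda>y. a * \<phi> y)"

definition coadj_act :: "('g \<Rightarrow> 'g \<Rightarrow> 'g) \<Rightarrow> 'g \<Rightarrow> ('g \<Rightarrow> 'k::field) \<Rightarrow> ('g \<Rightarrow> 'k)" where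
  "coadj_act br x \<phi> = (\<lambda>y. - \<phi> (br x y))"

definition dual_space :: "('k::field \<Rightarrow> 'g::ab_group_add \<Rightarrow> 'g) \<Rightarrow> ('g \<Rightarrow> 'k) set" where
  "dual_space s = {\<phi>. Vector_Spaces.linear s (*) \<phi>}"

abbreviation "C_triv s k \<equiv> ce_cochains s (*) UNIV k"
abbreviation "Z_triv s br k \<equiv> ce_cocycles s (*) triv_act br UNIV k"
abbreviation "B_triv s br k \<equiv> ce_coboundaries s (*) triv_act br UNIV k"
abbreviation "C_coad s k \<equiv> ce_cochains s dual_scale (dual_space s) k"
abbreviation "Z_coad s br k \<equiv> ce_cocycles s dual_scale (coadj_act br) br (dual_space s) k"
abbreviation "B_coad s br k \<equiv> ce_coboundaries s dual_scale (coadj_act br) br (dual_space s) k"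

text \<open>The map m^k : C^(k+1)(g,F) \<rightarrow> C^k(g,g*), (m f)(x_1..x_k)(x) = f(x_1..x_k,x).
(On lists of length \<noteq> k the result is automatically 0.)\<close>

definition m_map :: "('g list \<Rightarrow> 'k) \<Rightarrow> 'g list \<Rightarrow> 'g \<Rightarrow> 'k" where
  "m_map f = (\<lambda>xs x. f (xs @ [x]))"

text \<open>Cohomology of the quotient complex CR^n = C^(n+1)(g,g*) / m(C^(n+2)(g,F)), written on
representatives: HR^n = ZR n / BR n, where ZR n consists of the cochains whose differential
lies in the subcomplex and BR n = B^(n+1)(g,g*) + m(C^(n+2)(g,F)).\<close>

definition set_plus_sp :: "'a::plus set \<Rightarrow> 'a set \<Rightarrow> 'a set" where
  "set_plus_sp A B = {a + b | a b. a \<in> A \<and> b \<in> B}"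

definition ZR :: "('k::field \<Rightarrow> 'g::ab_group_add \<Rightarrow> 'g) \<Rightarrow> ('g \<Rightarrow> 'g \<Rightarrow> 'g) \<Rightarrow> nat
    \<Rightarrow> ('g list \<Rightarrow> 'g \<Rightarrow> 'k) set" where
  "ZR s br n = {f \<in> C_coad s (Suc n).
      ce_diff dual_scale (coadj_act br) br (Suc n) f \<in> m_map ` C_triv s (n + 3)}"

definition BR :: "('k::field \<Rightarrow> 'g::ab_group_add \<Rightarrow> 'g) \<Rightarrow> ('g \<Rightarrow> 'g \<Rightarrow> 'g) \<Rightarrow> nat
    \<Rightarrow> ('g list \<Rightarrow> 'g \<Rightarrow> 'k) set" where
  "BR s br n = set_plus_sp (B_coad s br (Suc n)) (m_map ` C_triv s (n + 2))"

end

theory Submission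
  imports Defs
begin

text \<open>The map m is an injective morphism from the shifted truncated trivial complex into
the coadjoint complex, and CR is its cokernel, so the long exact sequence is the snake
lemma; the connecting map sends the class of f in HR^n to the class of the unique trivial
cochain c with d f = m c. The isomorphism in the lowest degree holds because m maps the
1-cochains with trivial coefficients bijectively onto the 0-cochains with coefficients in
the dual. All of this rests on three facts about the Chevalley--Eilenberg differential of a
module: it maps cochains to cochains, it squares to zero, and it commutes with m. Each is
proved by induction on the degree from the Cartan calculus for the insertion ins x and the
Lie derivative L x, namely ins x (d f) = L x f - d (ins x f), [L x, L y] = L [x,y] and
[L x, d] = 0, since a cochain is determined by its value at [] and its insertions.\<close>

lemma alternating_imp_antisym:
  fixes B :: "'a::ab_group_add \<Rightarrow> 'a \<Rightarrow> 'b::ab_group_add"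
  assumes add_left: "\<And>x y z. B (x + y) z = B x z + B y z"
    and add_right: "\<And>x y z. B x (y + z) = B x y + B x z"
    and alternating: "\<And>x. B x x = 0"
  shows "B x y = - B y x"
proof -
  have "0 = B (x + y) (x + y)" by (rule alternating [symmetric])
  also have "\<dots> = B x x + B y x + (B x y + B y y)" by (simp only: add_left add_right)
  also have "\<dots> = B x y + B y x" by (simp add: alternating)
  finally show ?thesis by (metis eq_neg_iff_add_eq_0)
qed

definition signed :: "nat \<Rightarrow> 'm::ab_group_add \<Rightarrow> 'm" where
  "signed i u = (if even i then u else - u)"

lemma signed_0 [simp]: "signed 0 u = u"
  and signed_Suc [simp]: "signed (Suc i) u = - signed i u"
  and signed_signed [simp]: "signed i (signed i u) = u"
  by (simp_all add: signed_def)

lemma additive_signed: "additive (signed i)"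
  by standard (simp add: signed_def)

lemma del_nth_Cons_0 [simp]: "del_nth 0 (x # xs) = xs"
  and del_nth_Cons_Suc [simp]: "del_nth (Suc i) (x # xs) = x # del_nth i xs"
  by (simp_all add: del_nth_def)

definition ins :: "'g \<Rightarrow> ('g list \<Rightarrow> 'm) \<Rightarrow> 'g list \<Rightarrow> 'm" where
  "ins x f = (\<lambda>xs. f (x # xs))"

definition lie_deriv :: "('g \<Rightarrow> 'm \<Rightarrow> 'm::ab_group_add) \<Rightarrow> ('g \<Rightarrow> 'g \<Rightarrow> 'g) \<Rightarrow> 'g
    \<Rightarrow> ('g list \<Rightarrow> 'm) \<Rightarrow> 'g list \<Rightarrow> 'm" where
  "lie_deriv act br x f = (\<lambda>xs. act x (f xs) - (\<Sum>j<length xs. f (xs[j := br x (xs ! j)])))"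

lemma ins_apply: "ins x f xs = f (x # xs)"
  by (simp add: ins_def)

lemma additive_ins: "additive (ins x)"
  by standard (simp add: ins_def fun_eq_iff)

lemma ins_zero [simp]: "ins x 0 = 0"
  by (simp add: ins_def fun_eq_iff)

lemma fun_eq_insI: "F [] = G [] \<Longrightarrow> (\<And>y. ins y F = ins y G) \<Longrightarrow> F = G"
  by (rule ext, case_tac x) (auto simp: ins_def fun_eq_iff)

lemma sum_fun_apply: "sum F A y = (\<Sum>j\<in>A. F j y)"
  by (induction A rule: infinite_finite_induct) auto

lemma sum_triangle_shift:
  "(\<Sum>j<Suc n. \<Sum>i<j. g i j :: 'a::comm_monoid_add)
    = (\<Sum>j<n. g 0 (Suc j)) + (\<Sum>j<n. \<Sum>i<j. g (Suc i) (Suc j))"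
  by (simp only: sum.lessThan_Suc_shift sum.distrib) simp

lemma not_distinct_nth:
  "i < length xs \<Longrightarrow> j < length xs \<Longrightarrow> i \<noteq> j \<Longrightarrow> xs ! i = xs ! j \<Longrightarrow> \<not> distinct xs"
  by (metis nth_eq_iff_index_eq)

lemma ce_cochainsI:
  assumes "\<And>xs. length xs \<noteq> k \<Longrightarrow> f xs = 0"
    and "\<And>xs. length xs = k \<Longrightarrow> f xs \<in> M"
    and "\<And>xs i y z. length xs = k \<Longrightarrow> i < k \<Longrightarrow> f (xs[i := y + z]) = f (xs[i := y]) + f (xs[i := z])"
    and "\<And>xs i a y. length xs = k \<Longrightarrow> i < k \<Longrightarrow> f (xs[i := s a y]) = sm a (f (xs[i := y]))"
    and "\<And>xs. length xs = k \<Longrightarrow> \<not> distinct xs \<Longrightarrow> f xs = 0"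
  shows "f \<in> ce_cochains s sm M k"
  using assms by (simp add: ce_cochains_def)

locale lie_alg =
  fixes s :: "'k::field \<Rightarrow> 'g::ab_group_add \<Rightarrow> 'g" and br :: "'g \<Rightarrow> 'g \<Rightarrow> 'g"
  assumes lie: "lie_algebra s br"
begin

lemma bracket_add_left: "br (x + y) z = br x z + br y z"
  and bracket_add_right: "br x (y + z) = br x y + br x z"
  and bracket_scale_left: "br (s a x) y = s a (br x y)"
  and bracket_scale_right: "br x (s a y) = s a (br x y)"
  and bracket_self [simp]: "br x x = 0"
  and jacobi: "br x (br y z) + br y (br z x) + br z (br x y) = 0"
  using lie by (simp_all add: lie_algebra_def)

lemma vector_space_s: "vector_space s"
  using lie by (simp add: lie_algebra_def)

lemma additive_bracket_right: "additive (br x)"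
  by standard (rule bracket_add_right)

lemma bracket_uminus_right: "br x (- y) = - br x y"
  by (rule additive.minus[OF additive_bracket_right])

lemma bracket_antisym: "br x y = - br y x"
  by (rule alternating_imp_antisym) (simp_all add: bracket_add_left bracket_add_right)

lemma jacobi_commutator: "br y (br x z) - br x (br y z) = - br (br x y) z"
  using jacobi[of x y z] bracket_antisym[of z "br x y"] bracket_antisym[of z x]
  by (simp add: bracket_uminus_right algebra_simps)

end

text \<open>The module is a subspace M of an ambient module, and the action need only be a
representation on M: this is how the coadjoint module, the linear functionals among all
functions, is covered.\<close>

locale lie_module = lie_alg s br + module sm
  for s :: "'k::field \<Rightarrow> 'g::ab_group_add \<Rightarrow> 'g" and br :: "'g \<Rightarrow> 'g \<Rightarrow> 'g"
    and sm :: "'k \<Rightarrow> 'm::ab_group_add \<Rightarrow> 'm" +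
  fixes act :: "'g \<Rightarrow> 'm \<Rightarrow> 'm" and M :: "'m set"
  assumes subspace_M: "module.subspace sm M"
    and act_add: "act x (u + v) = act x u + act x v"
    and act_sm: "act x (sm a u) = sm a (act x u)"
    and act_add_left: "u \<in> M \<Longrightarrow> act (x + y) u = act x u + act y u"
    and act_scale_left: "u \<in> M \<Longrightarrow> act (s a x) u = sm a (act x u)"
    and act_bracket: "u \<in> M \<Longrightarrow> act (br x y) u = act x (act y u) - act y (act x u)"
    and act_closed: "u \<in> M \<Longrightarrow> act x u \<in> M"
begin

abbreviation "C \<equiv> ce_cochains s sm M"
abbreviation "d \<equiv> ce_diff sm act br"
abbreviation "L \<equiv> lie_deriv act br"

lemma additive_act: "additive (act x)"
  by standard (rule act_add)

lemma act_zero [simp]: "act x 0 = 0"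
  by (rule additive.zero[OF additive_act])

lemma sm_signed: "sm a (signed i u) = signed i (sm a u)"
  by (simp add: signed_def)

lemma sm_power_minus_one: "sm ((-1) ^ i) u = signed i u"
  by (induction i) (simp_all flip: scale_scale)

lemma ce_diff_signed: "d k f xs = (if length xs = Suc k then
      (\<Sum>i<Suc k. signed i (act (xs ! i) (f (del_nth i xs))))
    + (\<Sum>j<Suc k. \<Sum>i<j. signed (i + j) (f (br (xs ! i) (xs ! j) # del_nth i (del_nth j xs))))
    else 0)"
  by (simp add: ce_diff_def sm_power_minus_one)

lemma ce_diff_length: "length xs \<noteq> Suc k \<Longrightarrow> d k f xs = 0"
  by (simp add: ce_diff_signed)

lemma ce_diff_Nil [simp]: "d k f [] = 0"
  by (simp add: ce_diff_length)

lemma additive_ce_diff: "additive (d k)"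
  by standard (simp add: fun_eq_iff ce_diff_signed sum.distrib act_add
      additive.add[OF additive_signed] algebra_simps)

lemma ce_diff_zero [simp]: "d k 0 = 0"
  and ce_diff_minus: "d k (f - g) = d k f - d k g"
  using additive.zero[OF additive_ce_diff] additive.diff[OF additive_ce_diff] .

lemma ce_diff_sm: "d k (\<lambda>xs. sm a (f xs)) = (\<lambda>xs. sm a (d k f xs))"
  by (rule ext) (simp add: ce_diff_signed scale_right_distrib scale_sum_right sm_signed act_sm)

lemma additive_lie_deriv: "additive (L x)"
  by standard (simp add: lie_deriv_def fun_eq_iff sum.distrib act_add algebra_simps)

lemma lie_deriv_zero [simp]: "L x 0 = 0"
  and lie_deriv_minus: "L x (f - g) = L x f - L x g"
  using additive.zero[OF additive_lie_deriv] additive.diff[OF additive_lie_deriv] .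

lemma lie_deriv_Nil: "L x f [] = act x (f [])"
  by (simp add: lie_deriv_def)

lemma ins_lie_deriv: "ins y (L x f) = L x (ins y f) - ins (br x y) f"
  by (simp add: lie_deriv_def ins_def fun_eq_iff sum.lessThan_Suc_shift del: sum.lessThan_Suc)

lemma cochain_length: "f \<in> C k \<Longrightarrow> length xs \<noteq> k \<Longrightarrow> f xs = 0"
  by (simp add: ce_cochains_def)

lemma cochain_mem: "f \<in> C k \<Longrightarrow> f xs \<in> M"
  by (cases "length xs = k") (auto simp: ce_cochains_def subspace_0[OF subspace_M])

lemma cochain_add:
  "f \<in> C k \<Longrightarrow> i < length xs \<Longrightarrow> f (xs[i := y + z]) = f (xs[i := y]) + f (xs[i := z])"
  by (cases "length xs = k") (auto simp: ce_cochains_def)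

lemma cochain_sm: "f \<in> C k \<Longrightarrow> i < length xs \<Longrightarrow> f (xs[i := s a y]) = sm a (f (xs[i := y]))"
  by (cases "length xs = k") (auto simp: ce_cochains_def)

lemma cochain_not_distinct: "f \<in> C k \<Longrightarrow> \<not> distinct xs \<Longrightarrow> f xs = 0"
  by (cases "length xs = k") (auto simp: ce_cochains_def)

lemma cochain_swap:
  assumes f: "f \<in> C k" and ij: "i < length xs" "j < length xs" "i \<noteq> j"
  shows "f (xs[i := u, j := v]) = - f (xs[i := v, j := u])"
proof -
  have upd_comm: "xs[i := u, j := v] = xs[j := v, i := u]" for u v
    using ij by (simp add: list_update_swap)
  have "f (xs[i := u + u', j := v]) = f (xs[i := u, j := v]) + f (xs[i := u', j := v])" for u u' v
    using cochain_add[OF f, of i "xs[j := v]"] ij by (simp add: upd_comm)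
  moreover have "f (xs[i := u, j := v + v']) = f (xs[i := u, j := v]) + f (xs[i := u, j := v'])" for u v v'
    using cochain_add[OF f, of j "xs[i := u]"] ij by simp
  moreover have "f (xs[i := u, j := u]) = 0" for u
    using ij by (intro cochain_not_distinct[OF f] not_distinct_nth[of i _ j]) auto
  ultimately show ?thesis
    by (rule alternating_imp_antisym[of "\<lambda>u v. f (xs[i := u, j := v])"])
qed

lemma cochain_swap_Cons: "f \<in> C k \<Longrightarrow> f (a # b # r) = - f (b # a # r)"
  using cochain_swap[of f k 0 "a # b # r" 1 a b] by simp

lemma zero_cochain: "0 \<in> C k"
  by (simp add: ce_cochains_def subspace_0[OF subspace_M])

lemma add_cochain: "f \<in> C k \<Longrightarrow> g \<in> C k \<Longrightarrow> f + g \<in> C k"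
  by (simp add: ce_cochains_def subspace_add[OF subspace_M] scale_right_distrib algebra_simps)

lemma diff_cochain: "f \<in> C k \<Longrightarrow> g \<in> C k \<Longrightarrow> f - g \<in> C k"
  by (simp add: ce_cochains_def subspace_diff[OF subspace_M] scale_right_diff_distrib algebra_simps)

lemma cochain_Cons_add: "f \<in> C k \<Longrightarrow> f ((y + z) # r) = f (y # r) + f (z # r)"
  using cochain_add[of f k 0 "y # r" y z] by simp

lemma cochain_Cons_sm: "f \<in> C k \<Longrightarrow> f (s a y # r) = sm a (f (y # r))"
  using cochain_sm[of f k 0 "y # r" a y] by simp

lemma additive_ins_left: "f \<in> C k \<Longrightarrow> additive (\<lambda>x. ins x f)"
  by standard (simp add: ins_def fun_eq_iff cochain_Cons_add)

lemma
  assumes f: "f \<in> C k"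
  shows ins_add_left: "ins (x + y) f = ins x f + ins y f"
    and ins_zero_left: "ins 0 f = 0"
    and ins_uminus_left: "ins (- x) f = - ins x f"
    and ins_diff_left: "ins (x - y) f = ins x f - ins y f"
proof -
  interpret additive "\<lambda>x. ins x f" by (rule additive_ins_left[OF f])
  show "ins (x + y) f = ins x f + ins y f" by (rule add)
  show "ins 0 f = 0" by (rule zero)
  show "ins (- x) f = - ins x f" by (rule minus)
  show "ins (x - y) f = ins x f - ins y f" by (rule diff)
qed

lemma ins_scale_left: "f \<in> C k \<Longrightarrow> ins (s a x) f = (\<lambda>xs. sm a (ins x f xs))"
  by (simp add: ins_def fun_eq_iff cochain_Cons_sm)

lemma ins_ins_same: "f \<in> C k \<Longrightarrow> ins a (ins a f) = 0"
  by (rule ext) (simp add: ins_def cochain_not_distinct)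

lemma ins_cochain_0: "f \<in> C 0 \<Longrightarrow> ins x f = 0"
  by (rule ext) (simp add: ins_def cochain_length)

lemma ins_cochain: assumes f: "f \<in> C k" shows "ins x f \<in> C (k - 1)"
proof (cases k)
  case 0
  then show ?thesis using f by (simp add: ins_cochain_0 zero_cochain)
next
  case (Suc k')
  show ?thesis
  proof (rule ce_cochainsI)
    show "ins x f xs = 0" if "length xs \<noteq> k - 1" for xs
      using that Suc by (simp add: ins_def cochain_length[OF f])
    show "ins x f xs \<in> M" for xs
      by (simp add: ins_def cochain_mem[OF f])
    show "ins x f (xs[i := y + z]) = ins x f (xs[i := y]) + ins x f (xs[i := z])"
      if "length xs = k - 1" "i < k - 1" for xs i y z
      using cochain_add[OF f, of "Suc i" "x # xs" y z] that by (simp add: ins_def)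
    show "ins x f (xs[i := s a y]) = sm a (ins x f (xs[i := y]))"
      if "length xs = k - 1" "i < k - 1" for xs i a y
      using cochain_sm[OF f, of "Suc i" "x # xs" a y] that by (simp add: ins_def)
    show "ins x f xs = 0" if "\<not> distinct xs" for xs
      using that by (simp add: ins_def cochain_not_distinct[OF f])
  qed
qed

lemma ins_cochain_Suc: "f \<in> C (Suc k) \<Longrightarrow> ins x f \<in> C k"
  using ins_cochain[of f "Suc k"] by simp

lemma cochain_move_to_front:
  "f \<in> C k \<Longrightarrow> j < length xs \<Longrightarrow> f (y # del_nth j xs) = signed j (f (xs[j := y]))"
proof (induction j arbitrary: xs k f)
  case 0
  then obtain a r where "xs = a # r" by (cases xs) auto
  then show ?case by simp
next
  case (Suc j)
  then obtain a r where xs: "xs = a # r" and j: "j < length r" by (cases xs) auto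
  have "f (y # del_nth (Suc j) xs) = - ins a f (y # del_nth j r)"
    using cochain_swap_Cons[OF Suc.prems(1), of y a] by (simp add: xs ins_def)
  also have "ins a f (y # del_nth j r) = signed j (ins a f (r[j := y]))"
    using Suc.IH[OF ins_cochain[OF Suc.prems(1)] j] .
  finally show ?case by (simp add: xs ins_def)
qed

lemma lie_deriv_length: "f \<in> C k \<Longrightarrow> length xs \<noteq> k \<Longrightarrow> L x f xs = 0"
  by (simp add: lie_deriv_def cochain_length)

lemma lie_deriv_summand_add:
  assumes f: "f \<in> C k" and ij: "i < length xs" "j < length xs"
  shows "f ((xs[i := y + z])[j := br x (xs[i := y + z] ! j)])
       = f ((xs[i := y])[j := br x (xs[i := y] ! j)]) + f ((xs[i := z])[j := br x (xs[i := z] ! j)])"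
proof (cases "i = j")
  case True
  then show ?thesis using ij by (simp add: bracket_add_right cochain_add[OF f])
next
  case False
  then have "\<And>w c. (xs[i := w])[j := c] = (xs[j := c])[i := w]" by (simp add: list_update_swap)
  then show ?thesis using False ij by (simp add: cochain_add[OF f])
qed

lemma lie_deriv_summand_sm:
  assumes f: "f \<in> C k" and ij: "i < length xs" "j < length xs"
  shows "f ((xs[i := s a y])[j := br x (xs[i := s a y] ! j)])
       = sm a (f ((xs[i := y])[j := br x (xs[i := y] ! j)]))"
proof (cases "i = j")
  case True
  then show ?thesis using ij by (simp add: bracket_scale_right cochain_sm[OF f])
next
  case False
  then have "\<And>w c. (xs[i := w])[j := c] = (xs[j := c])[i := w]" by (simp add: list_update_swap)
  then show ?thesis using False ij by (simp add: cochain_sm[OF f])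
qed

lemma lie_deriv_not_distinct:
  assumes f: "f \<in> C k" and nd: "\<not> distinct xs"
  shows "L x f xs = 0"
proof -
  obtain a b where ab: "a < length xs" "b < length xs" "a \<noteq> b" "xs ! a = xs ! b"
    using nd by (auto simp: distinct_conv_nth)
  define g where "g j = f (xs[j := br x (xs ! j)])" for j
  have "g j = 0" if "j < length xs" "j \<notin> {a, b}" for j
    unfolding g_def using that ab by (intro cochain_not_distinct[OF f] not_distinct_nth[of a _ b]) auto
  then have "(\<Sum>j<length xs. g j) = g a + g b"
    using ab by (subst sum.mono_neutral_right[of _ "{a, b}"]) auto
  also have "g a + g b = 0"
  proof -
    have "f (xs[a := br x (xs ! a), b := xs ! a]) = - f (xs[a := xs ! a, b := br x (xs ! a)])"
      using cochain_swap[OF f ab(1,2,3)] .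
    moreover have "xs[a := br x (xs ! a), b := xs ! a] = xs[a := br x (xs ! a)]"
      using ab by (metis list_update_id list_update_swap)
    moreover have "xs[a := xs ! a, b := br x (xs ! a)] = xs[b := br x (xs ! b)]"
      using ab by (metis list_update_id)
    ultimately show ?thesis unfolding g_def using ab by simp
  qed
  finally show ?thesis by (simp add: lie_deriv_def g_def cochain_not_distinct[OF f nd])
qed

lemma lie_deriv_cochain: assumes f: "f \<in> C k" shows "L x f \<in> C k"
proof (rule ce_cochainsI)
  show "L x f xs = 0" if "length xs \<noteq> k" for xs
    using that by (rule lie_deriv_length[OF f])
  show "L x f xs \<in> M" for xs
    by (simp add: lie_deriv_def act_closed cochain_mem[OF f]
        subspace_diff[OF subspace_M] subspace_sum[OF subspace_M])
  show "L x f (xs[i := y + z]) = L x f (xs[i := y]) + L x f (xs[i := z])"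
    if "length xs = k" "i < k" for xs i y z
    using that by (simp add: lie_deriv_def cochain_add[OF f] act_add lie_deriv_summand_add[OF f]
        sum.distrib algebra_simps)
  show "L x f (xs[i := s a y]) = sm a (L x f (xs[i := y]))"
    if "length xs = k" "i < k" for xs i a y
    using that by (simp add: lie_deriv_def cochain_sm[OF f] act_sm lie_deriv_summand_sm[OF f]
        scale_sum_right scale_right_diff_distrib)
  show "L x f xs = 0" if "\<not> distinct xs" for xs
    using that by (rule lie_deriv_not_distinct[OF f])
qed

lemma lie_deriv_add_left: assumes f: "f \<in> C k" shows "L (x + y) f = L x f + L y f"
proof (rule ext)
  fix xs
  have "f (xs[j := br (x + y) (xs ! j)]) = f (xs[j := br x (xs ! j)]) + f (xs[j := br y (xs ! j)])"
    if "j < length xs" for j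
    using that by (simp add: bracket_add_left cochain_add[OF f])
  then show "L (x + y) f xs = (L x f + L y f) xs"
    by (simp add: lie_deriv_def act_add_left[OF cochain_mem[OF f]] sum.distrib algebra_simps)
qed

lemma lie_deriv_scale_left: assumes f: "f \<in> C k" shows "L (s a x) f = (\<lambda>xs. sm a (L x f xs))"
proof (rule ext)
  fix xs
  have "f (xs[j := br (s a x) (xs ! j)]) = sm a (f (xs[j := br x (xs ! j)]))"
    if "j < length xs" for j
    using that by (simp add: bracket_scale_left cochain_sm[OF f])
  then show "L (s a x) f xs = sm a (L x f xs)"
    by (simp add: lie_deriv_def act_scale_left[OF cochain_mem[OF f]] scale_sum_right
        scale_right_diff_distrib)
qed

lemma ce_diff_Cons:
  "length xs = k \<Longrightarrow> d k f (x # xs) = act x (f xs)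
    - (\<Sum>i<k. signed i (act (xs ! i) (f (x # del_nth i xs))))
    - (\<Sum>j<k. signed j (f (br x (xs ! j) # del_nth j xs)))
    + (\<Sum>j<k. \<Sum>i<j. signed (i + j) (f (br (xs ! i) (xs ! j) # x # del_nth i (del_nth j xs))))"
  by (simp only: ce_diff_signed sum_triangle_shift sum.lessThan_Suc_shift)
    (simp add: sum_negf)

text \<open>In d f (x # xs) the terms acting with x or bracketing with x give L x f, because
moving the bracket [x, xs!j] from the front to slot j costs the sign (-1)^j; the remaining
terms give - d (ins x f) after swapping x back to the front.\<close>

lemma cartan_Suc:
  assumes f: "f \<in> C (Suc k)"
  shows "ins x (d (Suc k) f) = L x f - d k (ins x f)"
proof (rule ext)
  fix xs
  show "ins x (d (Suc k) f) xs = (L x f - d k (ins x f)) xs"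
  proof (cases "length xs = Suc k")
    case False
    then show ?thesis by (simp add: ins_def ce_diff_length lie_deriv_length[OF f])
  next
    case True
    have R: "d k (ins x f) xs = (\<Sum>i<Suc k. signed i (act (xs ! i) (f (x # del_nth i xs))))
      + (\<Sum>j<Suc k. \<Sum>i<j. signed (i + j) (f (x # br (xs ! i) (xs ! j) # del_nth i (del_nth j xs))))"
      using True by (simp add: ce_diff_signed ins_apply)
    have "(\<Sum>j<Suc k. signed j (f (br x (xs ! j) # del_nth j xs)))
        = (\<Sum>j<Suc k. f (xs[j := br x (xs ! j)]))"
      using True by (intro sum.cong) (simp_all add: cochain_move_to_front[OF f])
    then show ?thesis
      using True by (simp add: ins_apply ce_diff_Cons R lie_deriv_def cochain_swap_Cons[OF f, of "br _ _" x]
          sum_negf additive.minus[OF additive_signed] del: sum.lessThan_Suc)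
  qed
qed

lemma cartan_0:
  assumes f: "f \<in> C 0"
  shows "ins x (d 0 f) = L x f"
proof (rule ext)
  fix xs
  show "ins x (d 0 f) xs = L x f xs"
  proof (cases xs)
    case Nil
    then show ?thesis by (simp add: ins_apply ce_diff_signed lie_deriv_def)
  next
    case Cons
    then show ?thesis by (simp add: ins_apply ce_diff_length lie_deriv_length[OF f])
  qed
qed

lemma cartan: "f \<in> C k \<Longrightarrow> ins x (d k f) = L x f - d (k - 1) (ins x f)"
  by (cases k) (simp_all add: cartan_0 cartan_Suc ins_cochain_0)

lemma swap_first_args:
  assumes ins_F: "\<And>x. ins x F \<in> C k"
    and add_first: "\<And>x y r. F ((x + y) # r) = F (x # r) + F (y # r)"
    and alternating: "\<And>a r. F (a # a # r) = 0"
  shows "F (a # b # r) = - F (b # a # r)"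
proof -
  have "F (x # (y + z) # r) = F (x # y # r) + F (x # z # r)" for x y z
    using cochain_Cons_add[OF ins_F[of x]] by (simp add: ins_def)
  from add_first this alternating show ?thesis
    by (rule alternating_imp_antisym[of "\<lambda>u v. F (u # v # r)"])
qed

lemma not_distinct_by_ins:
  assumes ins_F: "\<And>x. ins x F \<in> C k"
    and swap: "\<And>a b r. F (a # b # r) = - F (b # a # r)"
    and alternating: "\<And>a r. F (a # a # r) = 0"
    and nd: "\<not> distinct xs"
  shows "F xs = 0"
proof -
  obtain x r where xs: "xs = x # r" using nd by (cases xs) auto
  show ?thesis
  proof (cases "distinct r")
    case False
    then show ?thesis using cochain_not_distinct[OF ins_F[of x] False] by (simp add: xs ins_def)
  next
    case True
    then have "x \<in> set r" using nd xs by simp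
    then obtain b r' where r: "r = b # r'" by (cases r) auto
    show ?thesis
    proof (cases "x = b")
      case True
      then show ?thesis by (simp add: xs r alternating)
    next
      case False
      then have "\<not> distinct (x # r')" using \<open>x \<in> set r\<close> r by simp
      then have "ins b F (x # r') = 0" by (rule cochain_not_distinct[OF ins_F])
      then show ?thesis by (simp add: xs r swap[of x b r'] ins_def)
    qed
  qed
qed

lemma cochain_SucI:
  assumes length_F: "\<And>xs. length xs \<noteq> Suc k \<Longrightarrow> F xs = 0"
    and ins_F: "\<And>x. ins x F \<in> C k"
    and add_first: "\<And>x y r. F ((x + y) # r) = F (x # r) + F (y # r)"
    and sm_first: "\<And>a x r. F (s a x # r) = sm a (F (x # r))"
    and alternating: "\<And>a r. F (a # a # r) = 0"
  shows "F \<in> C (Suc k)"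
proof (rule ce_cochainsI)
  show "F xs = 0" if "length xs \<noteq> Suc k" for xs
    using that by (rule length_F)
  show "F xs \<in> M" if "length xs = Suc k" for xs
    using that cochain_mem[OF ins_F] by (cases xs) (auto simp: ins_def)
  show "F (xs[i := y + z]) = F (xs[i := y]) + F (xs[i := z])"
    if "length xs = Suc k" "i < Suc k" for xs i y z
    using that cochain_add[OF ins_F] add_first
    by (cases xs; cases i) (auto simp: ins_def)
  show "F (xs[i := s a y]) = sm a (F (xs[i := y]))"
    if "length xs = Suc k" "i < Suc k" for xs i a y
    using that cochain_sm[OF ins_F] sm_first
    by (cases xs; cases i) (auto simp: ins_def)
  show "F xs = 0" if "\<not> distinct xs" for xs
    using not_distinct_by_ins[OF ins_F swap_first_args[OF ins_F add_first alternating] alternating that] .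
qed

lemma ce_diff_cochain_Suc:
  assumes f: "f \<in> C (Suc k)" and IH: "\<And>x. d k (ins x f) \<in> C (Suc k)"
  shows "d (Suc k) f \<in> C (Suc (Suc k))"
proof (rule cochain_SucI)
  show "d (Suc k) f xs = 0" if "length xs \<noteq> Suc (Suc k)" for xs
    using that by (rule ce_diff_length)
  show "ins x (d (Suc k) f) \<in> C (Suc k)" for x
    by (simp add: cartan_Suc[OF f] diff_cochain lie_deriv_cochain[OF f] IH)
  show "d (Suc k) f ((x + y) # r) = d (Suc k) f (x # r) + d (Suc k) f (y # r)" for x y r
    using fun_cong[OF cartan_Suc[OF f, of "x + y"], of r] fun_cong[OF cartan_Suc[OF f, of x], of r]
      fun_cong[OF cartan_Suc[OF f, of y], of r]
    by (simp add: ins_apply lie_deriv_add_left[OF f] ins_add_left[OF f]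
        additive.add[OF additive_ce_diff])
  show "d (Suc k) f (s a x # r) = sm a (d (Suc k) f (x # r))" for a x r
  proof -
    have "ins (s a x) (d (Suc k) f) = (\<lambda>xs. sm a (ins x (d (Suc k) f) xs))"
      by (simp add: cartan_Suc[OF f] lie_deriv_scale_left[OF f] ins_scale_left[OF f] ce_diff_sm
          fun_eq_iff scale_right_diff_distrib)
    then show ?thesis by (simp add: ins_def fun_eq_iff)
  qed
  show "d (Suc k) f (a # a # r) = 0" for a r
  proof -
    have "ins a (L a f) = L a (ins a f)"
      by (simp add: ins_lie_deriv ins_zero_left[OF f])
    moreover have "ins a (d k (ins a f)) = L a (ins a f)"
      using cartan[OF ins_cochain_Suc[OF f], of a] by (simp add: ins_ins_same[OF f])
    ultimately have "ins a (ins a (d (Suc k) f)) = 0"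
      by (simp add: cartan_Suc[OF f] additive.diff[OF additive_ins])
    then show ?thesis by (simp add: ins_def fun_eq_iff)
  qed
qed

lemma ce_diff_cochain: "f \<in> C k \<Longrightarrow> d k f \<in> C (Suc k)"
proof (induction k arbitrary: f)
  case 0
  show ?case
  proof (rule cochain_SucI)
    show "d 0 f xs = 0" if "length xs \<noteq> Suc 0" for xs
      using that by (rule ce_diff_length)
    show "ins x (d 0 f) \<in> C 0" for x
      by (simp add: cartan_0[OF "0"] lie_deriv_cochain[OF "0"])
    show "d 0 f ((x + y) # r) = d 0 f (x # r) + d 0 f (y # r)" for x y r
      using fun_cong[OF cartan_0[OF "0", of "x + y"], of r] fun_cong[OF cartan_0[OF "0", of x], of r]
        fun_cong[OF cartan_0[OF "0", of y], of r]
      by (simp add: ins_apply lie_deriv_add_left[OF "0"])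
    show "d 0 f (s a x # r) = sm a (d 0 f (x # r))" for a x r
      using fun_cong[OF cartan_0[OF "0", of "s a x"], of r] fun_cong[OF cartan_0[OF "0", of x], of r]
      by (simp add: ins_apply lie_deriv_scale_left[OF "0"])
    show "d 0 f (a # a # r) = 0" for a r
      by (simp add: ce_diff_length)
  qed
next
  case (Suc k)
  then show ?case
    using ins_cochain_Suc[OF Suc.prems] by (intro ce_diff_cochain_Suc) simp_all
qed

lemma lie_deriv_bracket: "f \<in> C k \<Longrightarrow> L x (L y f) - L y (L x f) = L (br x y) f"
proof (induction k arbitrary: f x y)
  case 0
  show ?case
  proof (rule fun_eq_insI)
    show "(L x (L y f) - L y (L x f)) [] = L (br x y) f []"
      by (simp add: lie_deriv_Nil act_bracket[OF cochain_mem[OF "0"]])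
    show "ins z (L x (L y f) - L y (L x f)) = ins z (L (br x y) f)" for z
      by (simp add: additive.diff[OF additive_ins] ins_lie_deriv ins_cochain_0[OF "0"]
          ins_cochain_0[OF lie_deriv_cochain[OF "0"]])
  qed
next
  case (Suc k)
  have f: "f \<in> C (Suc k)" by fact
  show ?case
  proof (rule fun_eq_insI)
    show "(L x (L y f) - L y (L x f)) [] = L (br x y) f []"
      by (simp add: lie_deriv_Nil act_bracket[OF cochain_mem[OF f]])
    fix z
    have "ins z (L x (L y f) - L y (L x f))
        = (L x (L y (ins z f)) - L y (L x (ins z f))) + (ins (br y (br x z)) f - ins (br x (br y z)) f)"
      by (simp add: additive.diff[OF additive_ins] ins_lie_deriv lie_deriv_minus algebra_simps)
    also have "ins (br y (br x z)) f - ins (br x (br y z)) f = - ins (br (br x y) z) f"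
      by (simp add: ins_diff_left[OF f, symmetric] jacobi_commutator ins_uminus_left[OF f])
    also have "L x (L y (ins z f)) - L y (L x (ins z f)) = L (br x y) (ins z f)"
      by (rule Suc.IH[OF ins_cochain_Suc[OF f]])
    finally show "ins z (L x (L y f) - L y (L x f)) = ins z (L (br x y) f)"
      by (simp only: ins_lie_deriv diff_conv_add_uminus)
  qed
qed

lemma lie_deriv_ce_diff: "f \<in> C k \<Longrightarrow> L x (d k f) = d k (L x f)"
proof (induction k arbitrary: f x)
  case 0
  show ?case
  proof (rule fun_eq_insI)
    show "L x (d 0 f) [] = d 0 (L x f) []"
      by (simp add: lie_deriv_Nil ce_diff_length)
    show "ins y (L x (d 0 f)) = ins y (d 0 (L x f))" for y
      using lie_deriv_bracket[OF "0", of x y]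
      by (simp add: ins_lie_deriv cartan_0[OF "0"] cartan_0[OF lie_deriv_cochain[OF "0"]] algebra_simps)
  qed
next
  case (Suc k)
  have f: "f \<in> C (Suc k)" by fact
  show ?case
  proof (rule fun_eq_insI)
    show "L x (d (Suc k) f) [] = d (Suc k) (L x f) []"
      by (simp add: lie_deriv_Nil ce_diff_length)
    show "ins y (L x (d (Suc k) f)) = ins y (d (Suc k) (L x f))" for y
      using lie_deriv_bracket[OF f, of x y] Suc.IH[OF ins_cochain_Suc[OF f], of x]
      by (simp add: ins_lie_deriv cartan_Suc[OF f] cartan_Suc[OF lie_deriv_cochain[OF f]]
          lie_deriv_minus ce_diff_minus algebra_simps)
  qed
qed

text \<open>The insertions of d(d f) vanish by the Cartan formula, since L commutes with d and,
inductively, d(d (ins y f)) = 0.\<close>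

lemma ce_diff_ce_diff: "f \<in> C k \<Longrightarrow> d (Suc k) (d k f) = 0"
proof (induction k arbitrary: f)
  case 0
  show ?case
  proof (rule fun_eq_insI)
    show "ins y (d (Suc 0) (d 0 f)) = ins y 0" for y
      by (simp add: cartan_Suc[OF ce_diff_cochain[OF "0"]] cartan_0[OF "0"] lie_deriv_ce_diff[OF "0"])
  qed (simp add: ce_diff_length)
next
  case (Suc k)
  have f: "f \<in> C (Suc k)" by fact
  show ?case
  proof (rule fun_eq_insI)
    show "ins y (d (Suc (Suc k)) (d (Suc k) f)) = ins y 0" for y
      using Suc.IH[OF ins_cochain_Suc[OF f]]
      by (simp add: cartan_Suc[OF ce_diff_cochain[OF f]] cartan_Suc[OF f] lie_deriv_ce_diff[OF f]
          ce_diff_minus, simp add: zero_fun_def)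
  qed (simp add: ce_diff_length)
qed

end

lemma module_mult: "module ((*) :: 'k::field \<Rightarrow> 'k \<Rightarrow> 'k)"
  by standard (simp_all add: algebra_simps)

lemma vector_space_mult: "vector_space ((*) :: 'k::field \<Rightarrow> 'k \<Rightarrow> 'k)"
  by (simp add: vector_space_def algebra_simps)

lemma module_dual_scale: "module (dual_scale :: 'k::field \<Rightarrow> ('g \<Rightarrow> 'k) \<Rightarrow> _)"
  by standard (simp_all add: dual_scale_def fun_eq_iff algebra_simps)

context lie_alg
begin

lemma dual_space_iff:
  "\<phi> \<in> dual_space s \<longleftrightarrow> (\<forall>x y. \<phi> (x + y) = \<phi> x + \<phi> y) \<and> (\<forall>a x. \<phi> (s a x) = a * \<phi> x)"
  by (simp add: dual_space_def linear_iff vector_space_s vector_space_mult)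

lemma dual_space_scale: "\<phi> \<in> dual_space s \<Longrightarrow> \<phi> (s a x) = a * \<phi> x"
  by (simp add: dual_space_iff)

lemma additive_dual_space: "\<phi> \<in> dual_space s \<Longrightarrow> additive \<phi>"
  by standard (simp add: dual_space_iff)

lemma subspace_dual_space: "module.subspace dual_scale (dual_space s)"
  by (simp add: module.subspace_def[OF module_dual_scale] dual_space_iff dual_scale_def
      distrib_left mult.left_commute)

lemma coadj_act_bracket:
  assumes u: "u \<in> dual_space s"
  shows "coadj_act br (br x y) u = coadj_act br x (coadj_act br y u) - coadj_act br y (coadj_act br x u)"
proof -
  have "- u (br (br x y) z) = u (br y (br x z)) - u (br x (br y z))" for z
    by (simp add: additive.diff[OF additive_dual_space[OF u], symmetric] jacobi_commutator
        additive.minus[OF additive_dual_space[OF u]])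
  then show ?thesis by (simp add: coadj_act_def fun_eq_iff)
qed

end

sublocale lie_alg \<subseteq> T: lie_module s br "(*)" triv_act UNIV
proof (rule lie_module.intro[OF lie_alg_axioms module_mult], unfold_locales)
qed (simp_all add: module.subspace_UNIV[OF module_mult] triv_act_def)

sublocale lie_alg \<subseteq> Co: lie_module s br dual_scale "coadj_act br" "dual_space s"
proof (rule lie_module.intro[OF lie_alg_axioms module_dual_scale], unfold_locales)
  fix u v :: "'g \<Rightarrow> 'k" and x y a
  show "module.subspace dual_scale (dual_space s)" by (rule subspace_dual_space)
  show "coadj_act br x (u + v) = coadj_act br x u + coadj_act br x v"
    by (simp add: coadj_act_def fun_eq_iff)
  show "coadj_act br x (dual_scale a u) = dual_scale a (coadj_act br x u)"
    by (simp add: coadj_act_def dual_scale_def fun_eq_iff)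
  assume u: "u \<in> dual_space s"
  show "coadj_act br (x + y) u = coadj_act br x u + coadj_act br y u"
    using u by (simp add: coadj_act_def fun_eq_iff bracket_add_left additive.add[OF additive_dual_space])
  show "coadj_act br (s a x) u = dual_scale a (coadj_act br x u)"
    using u by (simp add: coadj_act_def dual_scale_def fun_eq_iff bracket_scale_left dual_space_scale)
  show "coadj_act br (br x y) u = coadj_act br x (coadj_act br y u) - coadj_act br y (coadj_act br x u)"
    using u by (rule coadj_act_bracket)
  show "coadj_act br x u \<in> dual_space s"
    using u by (simp add: dual_space_iff coadj_act_def bracket_add_right bracket_scale_right)
qed

context lie_alg
begin

lemma triv_ce_diff_0: "T.d 0 g = 0"
  by (rule ext) (simp add: T.ce_diff_signed triv_act_def)

lemma additive_m_map: "additive m_map"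
  by standard (simp add: m_map_def fun_eq_iff)

lemmas m_map_add = additive.add[OF additive_m_map]
  and m_map_zero [simp] = additive.zero[OF additive_m_map]
  and m_map_diff = additive.diff[OF additive_m_map]

lemma ins_m_map: "ins x (m_map f) = m_map (ins x f)"
  by (simp add: m_map_def ins_def)

lemma m_map_eq_0D:
  assumes c: "c \<in> T.C (Suc k)" and "m_map c = 0"
  shows "c = 0"
proof (rule ext)
  fix ys
  show "c ys = 0 ys"
  proof (cases ys rule: rev_exhaust)
    case Nil
    then show ?thesis by (simp add: T.cochain_length[OF c])
  next
    case (snoc xs x)
    have "m_map c xs x = 0" using assms by simp
    then show ?thesis by (simp add: snoc m_map_def)
  qed
qed

lemma m_map_cochain: assumes f: "f \<in> T.C (Suc k)" shows "m_map f \<in> Co.C k"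
proof (rule ce_cochainsI)
  show "m_map f xs = 0" if "length xs \<noteq> k" for xs
    using that by (simp add: m_map_def fun_eq_iff T.cochain_length[OF f])
  show "m_map f xs \<in> dual_space s" for xs
    using T.cochain_add[OF f, of "length xs" "xs @ [_]"] T.cochain_sm[OF f, of "length xs" "xs @ [_]"]
    by (simp add: dual_space_iff m_map_def)
  show "m_map f (xs[i := y + z]) = m_map f (xs[i := y]) + m_map f (xs[i := z])"
    if "length xs = k" "i < k" for xs i y z
    using that T.cochain_add[OF f, of i "xs @ [_]"] by (simp add: m_map_def fun_eq_iff list_update_append1)
  show "m_map f (xs[i := s a y]) = dual_scale a (m_map f (xs[i := y]))"
    if "length xs = k" "i < k" for xs i a y
    using that T.cochain_sm[OF f, of i "xs @ [_]"]
    by (simp add: m_map_def fun_eq_iff list_update_append1 dual_scale_def)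
  show "m_map f xs = 0" if "\<not> distinct xs" for xs
    using that by (simp add: m_map_def fun_eq_iff T.cochain_not_distinct[OF f])
qed

lemma m_map_surj_0:
  assumes h: "h \<in> Co.C 0"
  shows "\<exists>c \<in> T.C (Suc 0). m_map c = h"
proof
  define c where "c = (\<lambda>xs :: 'g list. if length xs = 1 then h [] (hd xs) else 0)"
  have phi: "h [] \<in> dual_space s" by (rule Co.cochain_mem[OF h])
  show "m_map c = h"
  proof (intro ext)
    fix xs y
    show "m_map c xs y = h xs y"
      by (cases xs) (simp_all add: m_map_def c_def Co.cochain_length[OF h])
  qed
  show "c \<in> T.C (Suc 0)"
  proof (rule ce_cochainsI)
    show "c xs = 0" if "length xs \<noteq> Suc 0" for xs
      using that by (simp add: c_def)
    show "c (xs[i := y + z]) = c (xs[i := y]) + c (xs[i := z])"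
      if "length xs = Suc 0" "i < Suc 0" for xs i y z
      using that by (cases xs) (simp_all add: c_def additive.add[OF additive_dual_space[OF phi]])
    show "c (xs[i := s a y]) = a * c (xs[i := y])" if "length xs = Suc 0" "i < Suc 0" for xs i a y
      using that by (cases xs) (simp_all add: c_def dual_space_scale[OF phi])
    show "c xs = 0" if "length xs = Suc 0" "\<not> distinct xs" for xs
      using that by (cases xs) simp_all
  qed simp
qed

lemma m_map_lie_deriv: "m_map (T.L x f) = Co.L x (m_map f)"
proof (intro ext)
  fix xs y
  have triv: "T.L x f (xs @ [y])
      = - (\<Sum>j<length xs. f (xs[j := br x (xs ! j)] @ [y])) - f (xs @ [br x y])"
    by (simp add: lie_deriv_def triv_act_def nth_append list_update_append1)
  have coad: "Co.L x (m_map f) xs y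
      = - f (xs @ [br x y]) - (\<Sum>j<length xs. f (xs[j := br x (xs ! j)] @ [y]))"
    by (simp add: lie_deriv_def coadj_act_def m_map_def sum_fun_apply)
  show "m_map (T.L x f) xs y = Co.L x (m_map f) xs y"
    unfolding m_map_def triv coad[unfolded m_map_def] by (simp add: algebra_simps)
qed

lemma m_map_ce_diff: "f \<in> T.C (Suc k) \<Longrightarrow> m_map (T.d (Suc k) f) = Co.d k (m_map f)"
proof (induction k arbitrary: f)
  case 0
  show ?case
  proof (rule fun_eq_insI)
    show "ins x (m_map (T.d (Suc 0) f)) = ins x (Co.d 0 (m_map f))" for x
      by (simp add: ins_m_map T.cartan_Suc[OF "0"] Co.cartan_0[OF m_map_cochain[OF "0"]]
          triv_ce_diff_0 m_map_lie_deriv)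
  qed (simp add: m_map_def T.ce_diff_length zero_fun_def)
next
  case (Suc k)
  have f: "f \<in> T.C (Suc (Suc k))" by fact
  show ?case
  proof (rule fun_eq_insI)
    show "ins x (m_map (T.d (Suc (Suc k)) f)) = ins x (Co.d (Suc k) (m_map f))" for x
      by (simp add: ins_m_map T.cartan_Suc[OF f] Co.cartan_Suc[OF m_map_cochain[OF f]] m_map_diff
          m_map_lie_deriv Suc.IH[OF T.ins_cochain_Suc[OF f]])
  qed (simp add: m_map_def T.ce_diff_length zero_fun_def)
qed

lemma set_plus_sp_iff: "x \<in> set_plus_sp A B \<longleftrightarrow> (\<exists>a\<in>A. \<exists>b\<in>B. x = a + b)"
  by (auto simp: set_plus_sp_def)

lemma B_coad_0: "B_coad s br 0 = {0}"
  and B_coad_Suc: "B_coad s br (Suc n) = Co.d n ` Co.C n"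
  and B_triv_Suc: "B_triv s br (Suc n) = T.d n ` T.C n"
  by (simp_all add: ce_coboundaries_def)

lemma Z_coad_iff: "f \<in> Z_coad s br k \<longleftrightarrow> f \<in> Co.C k \<and> Co.d k f = 0"
  by (simp add: ce_cocycles_def)

lemma Z_triv_iff: "c \<in> Z_triv s br k \<longleftrightarrow> c \<in> T.C k \<and> T.d k c = 0"
  by (simp add: ce_cocycles_def)

lemma ZR_iff:
  "f \<in> ZR s br n \<longleftrightarrow> f \<in> Co.C (Suc n) \<and> (\<exists>g \<in> T.C (Suc (Suc (Suc n))). Co.d (Suc n) f = m_map g)"
  by (auto simp: ZR_def numeral_3_eq_3)

lemma BR_iff:
  "f \<in> BR s br n \<longleftrightarrow> (\<exists>h \<in> Co.C n. \<exists>c \<in> T.C (Suc (Suc n)). f = Co.d n h + m_map c)"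
  by (auto simp: BR_def set_plus_sp_iff B_coad_Suc numeral_2_eq_2)

text \<open>The connecting map reads off the trivial cochain c with d f = m c from the identity
m c xs x = c (xs @ [x]); on the empty list it returns 0, the value of every c of positive
degree there.\<close>

definition connecting :: "nat \<Rightarrow> ('g list \<Rightarrow> 'g \<Rightarrow> 'k) \<Rightarrow> ('g list \<Rightarrow> 'k)" where
  "connecting n f = (\<lambda>ys. if ys = [] then 0 else Co.d (Suc n) f (butlast ys) (last ys))"

lemma connecting_eqI:
  assumes "Co.d (Suc n) f = m_map g" and "g [] = 0"
  shows "connecting n f = g"
proof (rule ext)
  fix ys
  show "connecting n f ys = g ys"
  proof (cases "ys = []")
    case True
    then show ?thesis using assms by (simp add: connecting_def)
  next
    case False
    then have "g ys = m_map g (butlast ys) (last ys)" by (simp add: m_map_def)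
    then show ?thesis using False assms by (simp add: connecting_def)
  qed
qed

lemma connecting_add: "connecting n (f + g) = connecting n f + connecting n g"
  by (simp add: connecting_def fun_eq_iff additive.add[OF Co.additive_ce_diff])

lemma connecting_scale: "connecting n (\<lambda>xs y. a * f xs y) = (\<lambda>xs. a * connecting n f xs)"
proof -
  have scale: "(\<lambda>xs y. a * f xs y) = (\<lambda>xs. dual_scale a (f xs))" by (simp add: dual_scale_def)
  show ?thesis
    unfolding scale connecting_def Co.ce_diff_sm by (simp add: dual_scale_def fun_eq_iff)
qed

lemma connecting_ZR:
  assumes "f \<in> ZR s br n"
  shows "connecting n f \<in> Z_triv s br (Suc (Suc (Suc n)))"
    and "Co.d (Suc n) f = m_map (connecting n f)"
proof -
  obtain g where f: "f \<in> Co.C (Suc n)" and g: "g \<in> T.C (Suc (Suc (Suc n)))"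
    and dfg: "Co.d (Suc n) f = m_map g"
    using assms by (auto simp: ZR_iff)
  have g_eq: "connecting n f = g" by (rule connecting_eqI[OF dfg T.cochain_length[OF g]]) simp
  then show "Co.d (Suc n) f = m_map (connecting n f)" using dfg by simp
  have "m_map (T.d (Suc (Suc (Suc n))) g) = Co.d (Suc (Suc n)) (Co.d (Suc n) f)"
    using m_map_ce_diff[OF g] dfg by simp
  also have "\<dots> = 0" by (rule Co.ce_diff_ce_diff[OF f])
  finally have "T.d (Suc (Suc (Suc n))) g = 0" by (rule m_map_eq_0D[OF T.ce_diff_cochain[OF g]])
  then show "connecting n f \<in> Z_triv s br (Suc (Suc (Suc n)))" using g g_eq by (simp add: Z_triv_iff)
qed

lemma connecting_cocycle: "connecting n ` ZR s br n \<subseteq> Z_triv s br (n + 3)"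
  using connecting_ZR(1) by (auto simp: numeral_3_eq_3)

lemma connecting_coboundary: "connecting n ` BR s br n \<subseteq> B_triv s br (n + 3)"
proof
  fix z assume "z \<in> connecting n ` BR s br n"
  then obtain h c where h: "h \<in> Co.C n" and c: "c \<in> T.C (Suc (Suc n))"
    and z: "z = connecting n (Co.d n h + m_map c)"
    by (auto simp: BR_iff)
  have "connecting n (Co.d n h + m_map c) = T.d (Suc (Suc n)) c"
    by (rule connecting_eqI)
      (simp_all add: additive.add[OF Co.additive_ce_diff] Co.ce_diff_ce_diff[OF h] m_map_ce_diff[OF c])
  then show "z \<in> B_triv s br (n + 3)" using z c by (simp add: numeral_3_eq_3 B_triv_Suc)
qed

lemma m_map_injective_H1: "{z \<in> Z_triv s br 1. m_map z \<in> B_coad s br 0} = B_triv s br 1"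
proof -
  have "B_triv s br 1 = {0}"
    using T.zero_cochain by (auto simp: B_triv_Suc triv_ce_diff_0)
  moreover have "z = 0" if "z \<in> Z_triv s br 1" and "m_map z = 0" for z
    using that m_map_eq_0D[of z 0] by (simp add: Z_triv_iff)
  moreover have "0 \<in> Z_triv s br 1"
    using T.zero_cochain by (simp add: Z_triv_iff)
  ultimately show ?thesis
    by (auto simp: B_coad_0)
qed

lemma m_map_surjective_H0: "set_plus_sp (m_map ` Z_triv s br 1) (B_coad s br 0) = Z_coad s br 0"
proof (intro set_eqI iffI)
  fix z assume "z \<in> set_plus_sp (m_map ` Z_triv s br 1) (B_coad s br 0)"
  then obtain c where c: "c \<in> T.C (Suc 0)" "T.d (Suc 0) c = 0" and z: "z = m_map c"
    unfolding set_plus_sp_iff B_coad_0 by (auto simp: Z_triv_iff)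
  show "z \<in> Z_coad s br 0" using z c m_map_cochain[OF c(1)] m_map_ce_diff[OF c(1)] by (simp add: Z_coad_iff)
next
  fix z assume "z \<in> Z_coad s br 0"
  then have zC: "z \<in> Co.C 0" and z0: "Co.d 0 z = 0" by (auto simp: Z_coad_iff)
  obtain c where c: "c \<in> T.C (Suc 0)" and mc: "m_map c = z" using m_map_surj_0[OF zC] by blast
  have "m_map (T.d (Suc 0) c) = 0" using m_map_ce_diff[OF c] mc z0 by simp
  then have "T.d (Suc 0) c = 0" by (rule m_map_eq_0D[OF T.ce_diff_cochain[OF c]])
  then show "z \<in> set_plus_sp (m_map ` Z_triv s br 1) (B_coad s br 0)"
    unfolding set_plus_sp_iff B_coad_0 using c mc by (auto simp: Z_triv_iff)
qed

lemma m_map_injective_H2: "{z \<in> Z_triv s br 2. m_map z \<in> B_coad s br 1} = B_triv s br 2"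
  unfolding numeral_2_eq_2 One_nat_def B_triv_Suc B_coad_Suc
proof (intro set_eqI iffI)
  fix z assume "z \<in> {z \<in> Z_triv s br (Suc (Suc 0)). m_map z \<in> Co.d 0 ` Co.C 0}"
  then obtain h where z: "z \<in> T.C (Suc (Suc 0))" and h: "h \<in> Co.C 0" and e: "m_map z = Co.d 0 h"
    by (auto simp: Z_triv_iff)
  obtain c where c: "c \<in> T.C (Suc 0)" and mc: "m_map c = h" using m_map_surj_0[OF h] by blast
  have "m_map (T.d (Suc 0) c - z) = 0" using m_map_ce_diff[OF c] mc e by (simp add: m_map_diff)
  then have "T.d (Suc 0) c - z = 0" by (rule m_map_eq_0D[OF T.diff_cochain[OF T.ce_diff_cochain[OF c] z]])
  then show "z \<in> T.d (Suc 0) ` T.C (Suc 0)" using c by (metis eq_iff_diff_eq_0 image_eqI)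
next
  fix z assume "z \<in> T.d (Suc 0) ` T.C (Suc 0)"
  then obtain c where c: "c \<in> T.C (Suc 0)" and z: "z = T.d (Suc 0) c" by auto
  show "z \<in> {z \<in> Z_triv s br (Suc (Suc 0)). m_map z \<in> Co.d 0 ` Co.C 0}"
    using z T.ce_diff_cochain[OF c] T.ce_diff_ce_diff[OF c] m_map_ce_diff[OF c] m_map_cochain[OF c]
    by (simp add: Z_triv_iff)
qed

lemma exact_at_H_coad:
  "{z \<in> Z_coad s br (n + 1). z \<in> BR s br n}
    = set_plus_sp (m_map ` Z_triv s br (n + 2)) (B_coad s br (n + 1))"
  unfolding Suc_eq_plus1[symmetric] add_2_eq_Suc'
proof (intro set_eqI iffI)
  fix z assume "z \<in> {z \<in> Z_coad s br (Suc n). z \<in> BR s br n}"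
  then obtain h c where z0: "Co.d (Suc n) z = 0" and h: "h \<in> Co.C n" and c: "c \<in> T.C (Suc (Suc n))"
    and z: "z = Co.d n h + m_map c"
    by (auto simp: Z_coad_iff BR_iff)
  have "m_map (T.d (Suc (Suc n)) c) = 0"
    using z0 z m_map_ce_diff[OF c] by (simp add: additive.add[OF Co.additive_ce_diff] Co.ce_diff_ce_diff[OF h])
  then have "T.d (Suc (Suc n)) c = 0" by (rule m_map_eq_0D[OF T.ce_diff_cochain[OF c]])
  then show "z \<in> set_plus_sp (m_map ` Z_triv s br (Suc (Suc n))) (B_coad s br (Suc n))"
    unfolding set_plus_sp_iff B_coad_Suc using z h c by (auto simp: Z_triv_iff add.commute)
next
  fix z assume "z \<in> set_plus_sp (m_map ` Z_triv s br (Suc (Suc n))) (B_coad s br (Suc n))"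
  then obtain h c where h: "h \<in> Co.C n" and c: "c \<in> T.C (Suc (Suc n))"
    and c0: "T.d (Suc (Suc n)) c = 0" and z: "z = m_map c + Co.d n h"
    unfolding set_plus_sp_iff B_coad_Suc by (auto simp: Z_triv_iff)
  have "z \<in> Co.C (Suc n)"
    using z Co.add_cochain[OF m_map_cochain[OF c] Co.ce_diff_cochain[OF h]] by simp
  moreover have "Co.d (Suc n) z = 0"
    using z m_map_ce_diff[OF c] c0 by (simp add: additive.add[OF Co.additive_ce_diff] Co.ce_diff_ce_diff[OF h])
  moreover have "z \<in> BR s br n" unfolding BR_iff using h c z by (auto simp: add.commute)
  ultimately show "z \<in> {z \<in> Z_coad s br (Suc n). z \<in> BR s br n}" by (simp add: Z_coad_iff)
qed

lemma exact_at_HR: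
  "{z \<in> ZR s br n. connecting n z \<in> B_triv s br (n + 3)} = set_plus_sp (Z_coad s br (n + 1)) (BR s br n)"
  unfolding Suc_eq_plus1[symmetric] numeral_3_eq_3 add_Suc_right add_0_right
proof (intro set_eqI iffI)
  fix z assume "z \<in> {z \<in> ZR s br n. connecting n z \<in> B_triv s br (Suc (Suc (Suc n)))}"
  then obtain c where zR: "z \<in> ZR s br n" and c: "c \<in> T.C (Suc (Suc n))"
    and dz: "connecting n z = T.d (Suc (Suc n)) c"
    by (auto simp: B_triv_Suc)
  have zC: "z \<in> Co.C (Suc n)" using zR by (simp add: ZR_iff)
  have "Co.d (Suc n) (z - m_map c) = 0"
    using connecting_ZR(2)[OF zR] dz m_map_ce_diff[OF c] by (simp add: Co.ce_diff_minus)
  then have "z - m_map c \<in> Z_coad s br (Suc n)"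
    using Co.diff_cochain[OF zC m_map_cochain[OF c]] by (simp add: Z_coad_iff)
  moreover have "m_map c \<in> BR s br n"
    unfolding BR_iff using c Co.zero_cochain by force
  ultimately show "z \<in> set_plus_sp (Z_coad s br (Suc n)) (BR s br n)"
    unfolding set_plus_sp_iff by (metis diff_add_cancel)
next
  fix z assume "z \<in> set_plus_sp (Z_coad s br (Suc n)) (BR s br n)"
  then obtain w h c where w: "w \<in> Co.C (Suc n)" "Co.d (Suc n) w = 0" and h: "h \<in> Co.C n"
    and c: "c \<in> T.C (Suc (Suc n))" and z: "z = w + (Co.d n h + m_map c)"
    unfolding set_plus_sp_iff Bex_def BR_iff Z_coad_iff by blast
  have zC: "z \<in> Co.C (Suc n)"
    using z Co.add_cochain[OF w(1) Co.add_cochain[OF Co.ce_diff_cochain[OF h] m_map_cochain[OF c]]] by simp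
  have dz: "Co.d (Suc n) z = m_map (T.d (Suc (Suc n)) c)"
    using z w(2) m_map_ce_diff[OF c] by (simp add: additive.add[OF Co.additive_ce_diff] Co.ce_diff_ce_diff[OF h])
  have "z \<in> ZR s br n" unfolding ZR_iff using zC dz T.ce_diff_cochain[OF c] by blast
  moreover have "connecting n z = T.d (Suc (Suc n)) c" by (rule connecting_eqI[OF dz]) simp
  ultimately show "z \<in> {z \<in> ZR s br n. connecting n z \<in> B_triv s br (Suc (Suc (Suc n)))}"
    using c by (simp add: B_triv_Suc)
qed

lemma exact_at_H_triv:
  "{z \<in> Z_triv s br (n + 3). m_map z \<in> B_coad s br (n + 2)}
    = set_plus_sp (connecting n ` ZR s br n) (B_triv s br (n + 3))"
  unfolding numeral_3_eq_3 add_2_eq_Suc' add_Suc_right add_0_right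
proof (intro set_eqI iffI)
  fix z assume "z \<in> {z \<in> Z_triv s br (Suc (Suc (Suc n))). m_map z \<in> B_coad s br (Suc (Suc n))}"
  then obtain h where z: "z \<in> T.C (Suc (Suc (Suc n)))" and z0: "T.d (Suc (Suc (Suc n))) z = 0"
    and h: "h \<in> Co.C (Suc n)" and mz: "m_map z = Co.d (Suc n) h"
    by (auto simp: Z_triv_iff B_coad_Suc)
  have "h \<in> ZR s br n" unfolding ZR_iff using h z mz[symmetric] by blast
  moreover have "connecting n h = z" by (rule connecting_eqI) (use mz T.cochain_length[OF z] in auto)
  ultimately show "z \<in> set_plus_sp (connecting n ` ZR s br n) (B_triv s br (Suc (Suc (Suc n))))"
    unfolding set_plus_sp_iff B_triv_Suc using T.zero_cochain
    by (metis T.ce_diff_zero add.right_neutral image_eqI)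
next
  fix z assume "z \<in> set_plus_sp (connecting n ` ZR s br n) (B_triv s br (Suc (Suc (Suc n))))"
  then obtain h c where hR: "h \<in> ZR s br n" and c: "c \<in> T.C (Suc (Suc n))"
    and z: "z = connecting n h + T.d (Suc (Suc n)) c"
    unfolding set_plus_sp_iff B_triv_Suc by blast
  note conn = connecting_ZR[OF hR]
  have "z \<in> Z_triv s br (Suc (Suc (Suc n)))"
    using z conn(1) T.ce_diff_cochain[OF c] T.ce_diff_ce_diff[OF c]
    by (simp add: Z_triv_iff T.add_cochain additive.add[OF T.additive_ce_diff])
  moreover have "m_map z = Co.d (Suc n) (h + m_map c)"
    using z conn(2) m_map_ce_diff[OF c] by (simp add: m_map_add additive.add[OF Co.additive_ce_diff])
  moreover have "h + m_map c \<in> Co.C (Suc n)"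
    using hR m_map_cochain[OF c] by (simp add: ZR_iff Co.add_cochain)
  ultimately show "z \<in> {z \<in> Z_triv s br (Suc (Suc (Suc n))). m_map z \<in> B_coad s br (Suc (Suc n))}"
    by (auto simp: B_coad_Suc)
qed

end

theorem proposition2p1:
  fixes s :: "'k::field \<Rightarrow> 'g::ab_group_add \<Rightarrow> 'g" and br :: "'g \<Rightarrow> 'g \<Rightarrow> 'g"
  assumes "lie_algebra s br"
  shows "(\<exists>\<delta> :: nat \<Rightarrow> ('g list \<Rightarrow> 'g \<Rightarrow> 'k) \<Rightarrow> ('g list \<Rightarrow> 'k).
            (\<forall>n. (\<forall>x\<in>ZR s br n. \<forall>y\<in>ZR s br n. \<delta> n (x + y) = \<delta> n x + \<delta> n y)
               \<and> (\<forall>a. \<forall>x\<in>ZR s br n. \<delta> n (\<lambda>xs y. a * x xs y) = (\<lambda>xs. a * \<delta> n x xs))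
               \<and> \<delta> n ` ZR s br n \<subseteq> Z_triv s br (n + 3)
               \<and> \<delta> n ` BR s br n \<subseteq> B_triv s br (n + 3))
          \<and> {z \<in> Z_triv s br 2. m_map z \<in> B_coad s br 1} = B_triv s br 2
          \<and> (\<forall>n. {z \<in> Z_coad s br (n + 1). z \<in> BR s br n}
                 = set_plus_sp (m_map ` Z_triv s br (n + 2)) (B_coad s br (n + 1)))
          \<and> (\<forall>n. {z \<in> ZR s br n. \<delta> n z \<in> B_triv s br (n + 3)}
                 = set_plus_sp (Z_coad s br (n + 1)) (BR s br n))
          \<and> (\<forall>n. {z \<in> Z_triv s br (n + 3). m_map z \<in> B_coad s br (n + 2)}
                 = set_plus_sp (\<delta> n ` ZR s br n) (B_triv s br (n + 3))))
       \<and> {z \<in> Z_triv s br 1. m_map z \<in> B_coad s br 0} = B_triv s br 1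
       \<and> set_plus_sp (m_map ` Z_triv s br 1) (B_coad s br 0) = Z_coad s br 0"
proof -
  interpret lie_alg s br by (rule lie_alg.intro) (rule assms)
  show ?thesis
    by (intro conjI exI[of _ connecting] allI ballI)
      (simp_all only: connecting_add connecting_scale connecting_cocycle connecting_coboundary
        m_map_injective_H2 exact_at_H_coad exact_at_HR exact_at_H_triv m_map_injective_H1
        m_map_surjective_H0)
qed

end
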